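(* Let $A$ (in $\mathcal H$) and $B$ (in $\mathcal K$) be closed densely defined operators with $A\dashv B$ via a (possibly unbounded) intertwining operator $T_{AB}$ and $B\dashv A$ via a (possibly unbounded) intertwining operator $T_{BA}$. Then $\sigma_p(A)=\sigma_p(B)$; if $\xi\in D(A)$ is an eigenvector of $A$ for eigenvalue $\lambda$ then $T_{AB}\xi$ is an eigenvector of $B$ for $\lambda$, and if $\eta\in D(B)$ is an eigenvector of $B$ for eigenvalue $\mu$ then $T_{BA}\eta$ is an eigenvector of $A$ for $\mu$; for each eigenvalue the multiplicities (dimensions of eigenspaces) for $A$ and $B$ coincide.
   Context: A closed densely defined operator $T:D(T)\subseteq\mathcal H\to\mathcal K$ is an intertwining operator for $A$ (in $\mathcal H$) and $B$ (in $\mathcal K$) if $D(A)\subseteq D(T)$ and $AD(A)\subseteq D(T)$, $TD(A)\subseteq D(B)$, and $BT\xi=TA\xi$ for all $\xi\in D(A)$. $A\dashv B$ means there is such an intertwining operator that is injective with densely defined inverse. $\sigma_p$ is the set of eigenvalues. *)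

theory Defs
  imports "HOL-Analysis.Analysis" "HOL-Library.Equipollence"
begin

class complex_inner = real_normed_vector +
  fixes cscale :: "complex \<Rightarrow> 'a \<Rightarrow> 'a" (infixr \<open>*\<^sub>C\<close> 75)
  fixes cinner :: "'a \<Rightarrow> 'a \<Rightarrow> complex"
  assumes cscale_add_right: "c *\<^sub>C (x + y) = c *\<^sub>C x + c *\<^sub>C y"
    and cscale_add_left: "(c + d) *\<^sub>C x = c *\<^sub>C x + d *\<^sub>C x"
    and cscale_cscale: "c *\<^sub>C (d *\<^sub>C x) = (c * d) *\<^sub>C x"
    and cscale_one: "1 *\<^sub>C x = x"
    and scaleR_cscale: "scaleR r x = complex_of_real r *\<^sub>C x"
    and cinner_commute: "cinner x y = cnj (cinner y x)"
    and cinner_add_right: "cinner x (y + z) = cinner x y + cinner x z"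
    and cinner_cscale_right: "cinner x (c *\<^sub>C y) = c * cinner x y"
    and norm_eq_sqrt_cinner: "norm x = sqrt (Re (cinner x x))"

class chilbert_space = complex_inner + complete_space

definition csubspace :: "'a::complex_inner set \<Rightarrow> bool" where
  "csubspace S \<longleftrightarrow> module.subspace cscale S"

definition lin_op :: "'a::complex_inner set \<Rightarrow> ('a \<Rightarrow> 'b::complex_inner) \<Rightarrow> bool" where
  "lin_op D T \<longleftrightarrow> csubspace D \<and>
     (\<forall>x\<in>D. \<forall>y\<in>D. T (x + y) = T x + T y) \<and>
     (\<forall>c. \<forall>x\<in>D. T (c *\<^sub>C x) = c *\<^sub>C T x)"

definition op_graph :: "'a set \<Rightarrow> ('a \<Rightarrow> 'b) \<Rightarrow> ('a \<times> 'b) set" where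
  "op_graph D T = {(x, T x) | x. x \<in> D}"

definition closed_dd_op :: "'a::chilbert_space set \<Rightarrow> ('a \<Rightarrow> 'b::chilbert_space) \<Rightarrow> bool" where
  "closed_dd_op D T \<longleftrightarrow> lin_op D T \<and> closure D = UNIV \<and> closed (op_graph D T)"

definition intertwining :: "'a::chilbert_space set \<Rightarrow> ('a \<Rightarrow> 'b::chilbert_space) \<Rightarrow>
    'a set \<Rightarrow> ('a \<Rightarrow> 'a) \<Rightarrow> 'b set \<Rightarrow> ('b \<Rightarrow> 'b) \<Rightarrow> bool" where
  "intertwining DT T DA A DB B \<longleftrightarrow> closed_dd_op DT T \<and> DA \<subseteq> DT \<and> A ` DA \<subseteq> DT \<and>
     T ` DA \<subseteq> DB \<and> (\<forall>\<xi>\<in>DA. B (T \<xi>) = T (A \<xi>))"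

text \<open>\<open>T\<close> witnesses \<open>A \<stileturn> B\<close>: an injective intertwining operator whose inverse
(with domain the range \<open>T ` DT\<close>) is densely defined.\<close>
definition qa_intertwining :: "'a::chilbert_space set \<Rightarrow> ('a \<Rightarrow> 'b::chilbert_space) \<Rightarrow>
    'a set \<Rightarrow> ('a \<Rightarrow> 'a) \<Rightarrow> 'b set \<Rightarrow> ('b \<Rightarrow> 'b) \<Rightarrow> bool" where
  "qa_intertwining DT T DA A DB B \<longleftrightarrow> intertwining DT T DA A DB B \<and> inj_on T DT \<and>
     closure (T ` DT) = UNIV"

definition eigenvector :: "'a::complex_inner set \<Rightarrow> ('a \<Rightarrow> 'a) \<Rightarrow> complex \<Rightarrow> 'a \<Rightarrow> bool" where
  "eigenvector D A l \<xi> \<longleftrightarrow> \<xi> \<in> D \<and> \<xi> \<noteq> 0 \<and> A \<xi> = l *\<^sub>C \<xi>"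

definition point_spectrum :: "'a::complex_inner set \<Rightarrow> ('a \<Rightarrow> 'a) \<Rightarrow> complex set" where
  "point_spectrum D A = {l. \<exists>\<xi>. eigenvector D A l \<xi>}"

definition eigenspace :: "'a::complex_inner set \<Rightarrow> ('a \<Rightarrow> 'a) \<Rightarrow> complex \<Rightarrow> 'a set" where
  "eigenspace D A l = {\<xi> \<in> D. A \<xi> = l *\<^sub>C \<xi>}"

text \<open>(Algebraic) dimension: \<open>S\<close> and \<open>S'\<close> have bases (over \<open>\<complex>\<close>) of the same cardinality.\<close>
definition cbasis_of :: "'a::complex_inner set \<Rightarrow> 'a set \<Rightarrow> bool" where
  "cbasis_of B S \<longleftrightarrow> B \<subseteq> S \<and> \<not> module.dependent cscale B \<and> module.span cscale B = S"

definition same_dim :: "'a::complex_inner set \<Rightarrow> 'b::complex_inner set \<Rightarrow> bool" where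
  "same_dim S S' \<longleftrightarrow> (\<exists>B B'. cbasis_of B S \<and> cbasis_of B' S' \<and> B \<approx> B')"

end

theory Submission
  imports Defs
begin

(*
  Only the algebraic content of the hypotheses is needed: an intertwining operator T for
  A and B is linear on its domain and satisfies B (T x) = T (A x) on D(A), so it maps the
  eigenspace E_A(l) = ker(A - l) into E_B(l); injectivity of T makes this map injective,
  so eigenvectors go to eigenvectors.  An injective linear map carries a basis of E_A(l)
  to an independent subset of E_B(l), and in any vector space an independent set is
  equipollent to a subset of a basis of its span (extend it to a basis and use that any
  two bases of a space are in bijection).  Hence the basis of E_A(l) injects into the
  basis of E_B(l); by symmetry also conversely, and Schroeder-Bernstein (lepoll_antisym)
  gives equal dimensions.
*)

text \<open>The complex scalar multiplication makes every complex inner product space a vector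
  space over \<open>\<complex>\<close>; this gives access to the library's theory of spans and bases.\<close>
interpretation cvs: vector_space "cscale :: complex \<Rightarrow> 'a \<Rightarrow> 'a::complex_inner"
  by unfold_locales (simp_all add: cscale_add_right cscale_add_left cscale_cscale cscale_one)

text \<open>In any vector space, an independent set lying in the span of a basis \<open>B\<close> is no larger
  than \<open>B\<close>: extend it to a basis of \<open>span B\<close>, which is in bijection with \<open>B\<close>.  This is the
  infinite-dimensional replacement for \<open>independent_span_bound\<close>.\<close>
lemma (in vector_space) independent_lepoll_basis:
  assumes I: "independent I" and I_span: "I \<subseteq> span B" and B: "independent B"
  shows "I \<lesssim> B"
proof -
  obtain C where "I \<subseteq> C" and C_span: "C \<subseteq> span B" and C: "independent C"
      and "span B \<subseteq> span C"
    using maximal_independent_subset_extend[OF I_span I] by blast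
  moreover have "span C \<subseteq> span B"
    using C_span by (rule span_minimal) (rule subspace_span)
  ultimately have "span C = span B" by blast
  then obtain f where "bij_betw f C B"
    using bij_if_span_eq_span_bases[OF C B] by blast
  then have "C \<approx> B" by (auto simp: eqpoll_def)
  then show ?thesis using \<open>I \<subseteq> C\<close> by (meson subset_imp_lepoll lepoll_trans2)
qed

lemma subspace_has_cbasis:
  assumes "cvs.subspace S" shows "\<exists>B. cbasis_of B S"
proof -
  obtain B where "B \<subseteq> S" "cvs.independent B" "S \<subseteq> cvs.span B"
    by (rule cvs.basis_exists[of S])
  moreover have "cvs.span B \<subseteq> S" using cvs.span_minimal[OF \<open>B \<subseteq> S\<close> assms] .
  ultimately show ?thesis unfolding cbasis_of_def by blast
qed

lemma lin_op_subspace: "lin_op D T \<Longrightarrow> cvs.subspace D"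
  by (simp add: lin_op_def csubspace_def)

lemma lin_op_zero: "lin_op D T \<Longrightarrow> T 0 = 0"
  unfolding lin_op_def csubspace_def
  by (metis add_cancel_right_right add_0 cvs.subspace_0)

lemma lin_op_sum:
  assumes lin: "lin_op D T" and "finite S" "S \<subseteq> D"
  shows "T (\<Sum>v\<in>S. c v *\<^sub>C v) = (\<Sum>v\<in>S. c v *\<^sub>C T v)"
  using assms(2,3)
proof (induction S rule: finite_induct)
  case empty
  then show ?case using lin_op_zero[OF lin] by simp
next
  case (insert x F)
  note sub = lin_op_subspace[OF lin]
  have "(\<Sum>v\<in>F. c v *\<^sub>C v) \<in> D" "c x *\<^sub>C x \<in> D"
    using insert.prems by (auto intro!: cvs.subspace_sum[OF sub] cvs.subspace_scale[OF sub])
  then show ?case using insert lin unfolding lin_op_def by simp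
qed

text \<open>A linear map that is injective on its domain sends independent subsets of the domain
  to independent sets: a vanishing combination of images pulls back to a vanishing
  combination of the original vectors.\<close>
lemma lin_op_inj_independent_image:
  assumes lin: "lin_op D f" and inj: "inj_on f D" and "I \<subseteq> D" and ind: "cvs.independent I"
  shows "cvs.independent (f ` I)"
proof
  note sub = lin_op_subspace[OF lin]
  assume "cvs.dependent (f ` I)"
  then obtain t u where "finite t" "t \<subseteq> f ` I" and t_zero: "(\<Sum>v\<in>t. u v *\<^sub>C v) = 0"
      and "\<exists>v\<in>t. u v \<noteq> 0"
    unfolding cvs.dependent_explicit by blast
  then obtain s where s: "s \<subseteq> I" "t = f ` s" by (meson subset_imageE)
  have inj_s: "inj_on f s" using inj_on_subset[OF inj] s \<open>I \<subseteq> D\<close> by blast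
  have "finite s" using \<open>finite t\<close> s(2) inj_s finite_image_iff by blast
  have comb_in_D: "(\<Sum>w\<in>s. u (f w) *\<^sub>C w) \<in> D"
    using s \<open>I \<subseteq> D\<close> by (auto intro!: cvs.subspace_sum[OF sub] cvs.subspace_scale[OF sub])
  have "f (\<Sum>w\<in>s. u (f w) *\<^sub>C w) = (\<Sum>w\<in>s. u (f w) *\<^sub>C f w)"
    using lin_op_sum[OF lin \<open>finite s\<close>, of "\<lambda>w. u (f w)"] s \<open>I \<subseteq> D\<close> by blast
  also have "\<dots> = (\<Sum>v\<in>t. u v *\<^sub>C v)" using s(2) inj_s by (simp add: sum.reindex)
  also have "\<dots> = f 0" using t_zero lin_op_zero[OF lin] by simp
  finally have "(\<Sum>w\<in>s. u (f w) *\<^sub>C w) = 0"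
    by (rule inj_onD[OF inj _ comb_in_D cvs.subspace_0[OF sub]])
  moreover obtain w where "w \<in> s" "u (f w) \<noteq> 0" using \<open>\<exists>v\<in>t. u v \<noteq> 0\<close> s(2) by blast
  ultimately have "cvs.dependent I"
    unfolding cvs.dependent_explicit using \<open>finite s\<close> s(1)
    by (intro exI[of _ s] exI[of _ "\<lambda>w. u (f w)"]) blast
  then show False using ind by blast
qed

lemma eigenspace_subspace:
  assumes lin: "lin_op D A" shows "cvs.subspace (eigenspace D A l)"
proof (rule cvs.subspaceI)
  note sub = lin_op_subspace[OF lin]
  show "0 \<in> eigenspace D A l"
    using lin_op_zero[OF lin] cvs.subspace_0[OF sub] by (simp add: eigenspace_def)
  show "x + y \<in> eigenspace D A l" if "x \<in> eigenspace D A l" "y \<in> eigenspace D A l" for x y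
    using that lin cvs.subspace_add[OF sub]
    by (auto simp: eigenspace_def lin_op_def cscale_add_right)
  show "c *\<^sub>C x \<in> eigenspace D A l" if "x \<in> eigenspace D A l" for c x
    using that lin cvs.subspace_scale[OF sub]
    by (auto simp: eigenspace_def lin_op_def cscale_cscale mult.commute)
qed

lemma eigenvector_iff_eigenspace: "eigenvector D A l \<xi> \<longleftrightarrow> \<xi> \<in> eigenspace D A l \<and> \<xi> \<noteq> 0"
  by (auto simp: eigenvector_def eigenspace_def)

text \<open>From \<open>B (T \<xi>) = T (A \<xi>)\<close> and linearity of \<open>T\<close>: \<open>T\<close> maps \<open>E_A(l)\<close> into \<open>E_B(l)\<close>.\<close>
lemma intertwining_eigenspace:
  assumes "intertwining DT T DA A DB B" and "\<xi> \<in> eigenspace DA A l"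
  shows "T \<xi> \<in> eigenspace DB B l"
proof -
  have "\<xi> \<in> DA" "A \<xi> = l *\<^sub>C \<xi>" using assms(2) by (auto simp: eigenspace_def)
  moreover have "\<xi> \<in> DT" using assms(1) \<open>\<xi> \<in> DA\<close> by (auto simp: intertwining_def)
  ultimately show ?thesis
    using assms(1) unfolding intertwining_def closed_dd_op_def lin_op_def eigenspace_def by auto
qed

lemma qa_intertwining_eigenvector:
  assumes qa: "qa_intertwining DT T DA A DB B" and e: "eigenvector DA A l \<xi>"
  shows "eigenvector DB B l (T \<xi>)"
proof -
  have i: "intertwining DT T DA A DB B" and lin: "lin_op DT T" and inj: "inj_on T DT"
    using qa by (auto simp: qa_intertwining_def intertwining_def closed_dd_op_def)
  have "\<xi> \<in> DT" using i e by (auto simp: intertwining_def eigenvector_def)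
  moreover have "0 \<in> DT" using cvs.subspace_0[OF lin_op_subspace[OF lin]] .
  moreover have "\<xi> \<noteq> 0" using e by (simp add: eigenvector_def)
  ultimately have "T \<xi> \<noteq> T 0" using inj by (meson inj_onD)
  then have "T \<xi> \<noteq> 0" using lin_op_zero[OF lin] by simp
  then show ?thesis
    using intertwining_eigenspace[OF i] e by (simp add: eigenvector_iff_eigenspace)
qed

lemma qa_intertwining_basis_lepoll:
  assumes qa: "qa_intertwining DT T DA A DB B"
    and bA: "cbasis_of BA (eigenspace DA A l)" and bB: "cbasis_of BB (eigenspace DB B l)"
  shows "BA \<lesssim> BB"
proof -
  have i: "intertwining DT T DA A DB B" and lin: "lin_op DT T" and inj: "inj_on T DT"
    using qa by (auto simp: qa_intertwining_def intertwining_def closed_dd_op_def)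
  have BA_DT: "BA \<subseteq> DT" using bA i by (auto simp: cbasis_of_def eigenspace_def intertwining_def)
  have "cvs.independent (T ` BA)"
    using lin_op_inj_independent_image[OF lin inj BA_DT] bA by (simp add: cbasis_of_def)
  moreover have "T ` BA \<subseteq> cvs.span BB"
    using bA bB intertwining_eigenspace[OF i] by (auto simp: cbasis_of_def)
  moreover have "cvs.independent BB" using bB by (simp add: cbasis_of_def)
  ultimately have "T ` BA \<lesssim> BB" by (rule cvs.independent_lepoll_basis)
  moreover have "BA \<approx> T ` BA"
    using inj_on_subset[OF inj BA_DT] by (simp add: eqpoll_sym inj_on_image_eqpoll_self)
  ultimately show ?thesis using lepoll_trans1 by blast
qed

theorem proposition3p20:
  fixes DA :: "'h::chilbert_space set" and A :: "'h \<Rightarrow> 'h"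
    and DB :: "'k::chilbert_space set" and B :: "'k \<Rightarrow> 'k"
    and DTAB :: "'h set" and TAB :: "'h \<Rightarrow> 'k"
    and DTBA :: "'k set" and TBA :: "'k \<Rightarrow> 'h"
  assumes "closed_dd_op DA A" and "closed_dd_op DB B"
    and "qa_intertwining DTAB TAB DA A DB B"
    and "qa_intertwining DTBA TBA DB B DA A"
  shows "point_spectrum DA A = point_spectrum DB B
    \<and> (\<forall>l \<xi>. eigenvector DA A l \<xi> \<longrightarrow> eigenvector DB B l (TAB \<xi>))
    \<and> (\<forall>m \<eta>. eigenvector DB B m \<eta> \<longrightarrow> eigenvector DA A m (TBA \<eta>))
    \<and> (\<forall>l\<in>point_spectrum DA A. same_dim (eigenspace DA A l) (eigenspace DB B l))"
proof -
  have AB: "\<forall>l \<xi>. eigenvector DA A l \<xi> \<longrightarrow> eigenvector DB B l (TAB \<xi>)"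
    using qa_intertwining_eigenvector[OF assms(3)] by blast
  have BA: "\<forall>m \<eta>. eigenvector DB B m \<eta> \<longrightarrow> eigenvector DA A m (TBA \<eta>)"
    using qa_intertwining_eigenvector[OF assms(4)] by blast
  have "same_dim (eigenspace DA A l) (eigenspace DB B l)" for l
  proof -
    have "lin_op DA A" "lin_op DB B" using assms(1,2) by (auto simp: closed_dd_op_def)
    then obtain bA bB where bA: "cbasis_of bA (eigenspace DA A l)"
        and bB: "cbasis_of bB (eigenspace DB B l)"
      by (meson subspace_has_cbasis eigenspace_subspace)
    have "bA \<approx> bB"
      using qa_intertwining_basis_lepoll[OF assms(3) bA bB]
        qa_intertwining_basis_lepoll[OF assms(4) bB bA] by (rule lepoll_antisym)
    then show ?thesis using bA bB unfolding same_dim_def by blast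
  qed
  then show ?thesis using AB BA unfolding point_spectrum_def by blast
qed

end
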